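(* Let $G=C_{2n}(a,n)$ with $a\in\{1,2\}$ be a connected cubic circulant graph, and let $\Delta$ be an odd cycle in $G$ (a cycle subgraph of $G$ of odd length). Then $N_G(V(\Delta))=V(G)$.
   Context: For integers $1\le a<n$, $C_{2n}(a,n)$ is the simple graph on vertex set $[2n]$ in which distinct vertices $i,j$ are adjacent iff $|i-j|\in\{a,n,2n-a\}$. For a set $U$ of vertices, $N_G(U)=\{v\in V(G)\mid \{u,v\}\in E(G)\text{ for some }u\in U\}$. *)

theory Defs
  imports Main
begin

definition circ_verts :: "nat \<Rightarrow> nat set" where
  "circ_verts n = {1..2*n}"

definition circ_adj :: "nat \<Rightarrow> nat \<Rightarrow> nat \<Rightarrow> nat \<Rightarrow> bool" where
  "circ_adj n a i j \<longleftrightarrow> i \<in> circ_verts n \<and> j \<in> circ_verts n \<and> i \<noteq> j \<and>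
     \<bar>int i - int j\<bar> \<in> {int a, int n, 2 * int n - int a}"

definition circ_nbhd :: "nat \<Rightarrow> nat \<Rightarrow> nat set \<Rightarrow> nat set" where
  "circ_nbhd n a U = {v \<in> circ_verts n. \<exists>u\<in>U. circ_adj n a u v}"

definition circ_connected :: "nat \<Rightarrow> nat \<Rightarrow> bool" where
  "circ_connected n a \<longleftrightarrow>
     (\<forall>i\<in>circ_verts n. \<forall>j\<in>circ_verts n. (circ_adj n a)\<^sup>*\<^sup>* i j)"

definition circ_cubic :: "nat \<Rightarrow> nat \<Rightarrow> bool" where
  "circ_cubic n a \<longleftrightarrow> (\<forall>i\<in>circ_verts n. card {j. circ_adj n a i j} = 3)"

definition circ_cycle :: "nat \<Rightarrow> nat \<Rightarrow> nat list \<Rightarrow> bool" where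
  "circ_cycle n a vs \<longleftrightarrow> length vs \<ge> 3 \<and> distinct vs \<and>
     (\<forall>k < length vs. circ_adj n a (vs ! k) (vs ! ((k + 1) mod length vs)))"

end

theory Submission
  imports Defs "HOL-Number_Theory.Cong"
begin

text \<open>Read modulo 2n, every edge of C_{2n}(a,n) is a step by \<open>\<plusminus>a\<close> or by n. Along a closed
  walk let q be the signed number of \<open>\<plusminus>a\<close>-steps and k the number of n-steps; then
  \<open>a q + n k \<equiv> 0 (mod 2n)\<close> and \<open>q + k\<close> has the parity of the length. For an odd cycle
  and a coprime to n (for a = 2 connectivity forces n to be odd) this gives \<open>n | q\<close> and
  \<open>q \<noteq> 0\<close>, so the partial sums of the signed \<open>\<plusminus>a\<close>-steps, which move by at most 1,
  pass through every residue mod n. Hence the cycle meets every residue class mod n, and as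
  each class is a pair \<open>{u, u + n}\<close> of adjacent vertices, every vertex lies on the cycle or
  next to it.\<close>

lemma circ_adj_sym: "circ_adj n a i j \<Longrightarrow> circ_adj n a j i"
  unfolding circ_adj_def by (auto simp: abs_minus_commute)

lemma circ_adj_step:
  assumes "circ_adj n a i j"
  shows "\<exists>e\<in>{-1, 0, 1}. [int j = int i + int a * e + int n * (1 - \<bar>e\<bar>)] (mod 2 * int n)"
proof -
  from assms consider "int j = int i + int a" | "int j = int i - int a"
    | "int j = int i + int n" | "int j = int i - int n"
    | "int j = int i - int a + 2 * int n" | "int j = int i + int a - 2 * int n"
    by (auto simp: circ_adj_def abs_if split: if_splits)
  then show ?thesis
    by cases (simp_all add: cong_iff_dvd_diff)
qed

lemma circ_adj_if_cong:
  assumes "i \<in> circ_verts n" "j \<in> circ_verts n" "i \<noteq> j" "[int i = int j] (mod int n)"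
  shows "circ_adj n a i j"
proof -
  obtain q where q: "int i - int j = int n * q"
    using assms(4) by (auto simp: cong_iff_dvd_diff)
  have "0 < int n" using assms(1) by (auto simp: circ_verts_def)
  have "q \<noteq> 0" using q assms(3) by auto
  moreover have "\<bar>int n * q\<bar> < 2 * int n"
    using q assms(1,2) by (auto simp: circ_verts_def)
  then have "\<bar>q\<bar> < 2"
    using \<open>0 < int n\<close> by (simp add: abs_mult)
  ultimately have "\<bar>q\<bar> = 1"
    by linarith
  then show ?thesis
    using q assms(1-3) by (auto simp: circ_adj_def abs_mult)
qed

lemma odd_if_circ_connected_2:
  assumes "circ_connected n 2" "0 < n"
  shows "odd n"
proof
  assume "even n"
  have "even i = even j" if "(circ_adj n 2)\<^sup>*\<^sup>* i j" for i j
    using that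
  proof induction
    case (step j k)
    have "\<bar>int j - int k\<bar> \<in> {2, int n, 2 * int n - 2}"
      using step(2) by (simp add: circ_adj_def)
    moreover have "even d" if "d \<in> {2, int n, 2 * int n - 2}" for d :: int
      using that \<open>even n\<close> by auto
    ultimately have "even \<bar>int j - int k\<bar>"
      by blast
    with step(3) show ?case
      by (simp add: even_diff)
  qed simp
  moreover have "(circ_adj n 2)\<^sup>*\<^sup>* 1 2"
    using assms by (auto simp: circ_connected_def circ_verts_def)
  ultimately show False
    by fastforce
qed

lemma int_walk_intermediate_value:
  fixes f :: "nat \<Rightarrow> int"
  assumes "\<forall>k<N. \<bar>f (Suc k) - f k\<bar> \<le> 1" "f 0 \<le> x" "x \<le> f N"
  shows "\<exists>t\<le>N. f t = x"
  using assms
proof (induction N)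
  case (Suc N)
  show ?case
  proof (cases "x \<le> f N")
    case True
    moreover have "\<forall>k<N. \<bar>f (Suc k) - f k\<bar> \<le> 1"
      using Suc.prems(1) by simp
    ultimately obtain t where "t \<le> N" "f t = x"
      using Suc.IH Suc.prems(2) by blast
    then show ?thesis
      using le_SucI by blast
  next
    case False
    moreover have "\<bar>f (Suc N) - f N\<bar> \<le> 1"
      using Suc.prems(1) by simp
    ultimately have "f (Suc N) = x"
      using Suc.prems(3) by auto
    then show ?thesis
      by blast
  qed
qed simp

lemma int_walk_meets_residues:
  fixes f :: "nat \<Rightarrow> int"
  assumes steps: "\<forall>k<N. \<bar>f (Suc k) - f k\<bar> \<le> 1"
    and "f 0 = 0" "0 < n" "n dvd f N" "f N \<noteq> 0"
  shows "\<exists>t<N. [f t = r] (mod n)"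
proof -
  have rising: "\<exists>t<N. [g t = s] (mod n)"
    if g_steps: "\<forall>k<N. \<bar>g (Suc k) - g k\<bar> \<le> 1" and "g 0 = 0" "n dvd g N" "0 < g N" for g s
  proof -
    have "n \<le> g N"
      using \<open>0 < n\<close> \<open>n dvd g N\<close> \<open>0 < g N\<close> by (simp add: zdvd_imp_le)
    moreover have "s mod n < n"
      using \<open>0 < n\<close> by simp
    ultimately obtain t where t: "t \<le> N" "g t = s mod n"
      using int_walk_intermediate_value[OF g_steps, of "s mod n"] \<open>g 0 = 0\<close> \<open>0 < n\<close> by fastforce
    with \<open>n \<le> g N\<close> \<open>s mod n < n\<close> have "t < N"
      by (metis le_neq_implies_less not_less)
    with t show ?thesis
      by (metis cong_mod_right cong_refl)
  qed
  show ?thesis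
  proof (cases "0 < f N")
    case True
    then show ?thesis using rising[of f r] assms by blast
  next
    case False
    then have "\<exists>t<N. [- f t = - r] (mod n)"
      using rising[of "\<lambda>t. - f t" "- r"] assms by (simp add: abs_minus_commute)
    then show ?thesis
      by (simp add: cong_minus_minus_iff)
  qed
qed

lemma walk_cong_sum:
  assumes "\<And>k. k < t \<Longrightarrow> [v (Suc k) = v k + d k] (mod m)"
  shows "[v t = v 0 + (\<Sum>k<t. d k)] (mod m)"
  using assms
proof (induction t)
  case (Suc t)
  then have "[v (Suc t) = v 0 + (\<Sum>k<t. d k) + d t] (mod m)"
    by (meson cong_add cong_refl cong_trans less_SucI lessI)
  then show ?case
    by (simp add: add.assoc)
qed simp

lemma cong_odd_sum_imp_dvd_nonzero:
  fixes a n q k :: int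
  assumes "coprime a n" "n \<noteq> 0" "[a * q + n * k = 0] (mod 2 * n)" "odd (q + k)"
  shows "n dvd q" and "q \<noteq> 0"
proof -
  have "n dvd a * q + n * k"
    using assms(3) by (meson cong_0_iff dvd_mult_right)
  then show "n dvd q"
    using assms(1) by (simp add: dvd_add_left_iff coprime_commute coprime_dvd_mult_right_iff)
  show "q \<noteq> 0"
  proof
    assume "q = 0"
    then have "2 * n dvd n * k"
      using assms(3) by (simp add: cong_0_iff)
    then have "even k"
      using assms(2) by (simp add: mult.commute)
    with \<open>q = 0\<close> assms(4) show False
      by simp
  qed
qed

lemma circ_cycle_displacement:
  assumes "circ_cycle n a vs"
  obtains e :: "nat \<Rightarrow> int" where "\<And>k. e k \<in> {-1, 0, 1}"
    and "\<And>t. [int (vs ! (t mod length vs))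
      = int (vs ! 0) + (int a * (\<Sum>k<t. e k) + int n * (\<Sum>k<t. 1 - \<bar>e k\<bar>))] (mod 2 * int n)"
proof -
  define L where "L = length vs"
  have "0 < L"
    using assms by (auto simp: circ_cycle_def L_def)
  define v where "v k = int (vs ! (k mod L))" for k
  have "\<exists>e\<in>{-1, 0, 1}. [v (Suc k) = v k + int a * e + int n * (1 - \<bar>e\<bar>)] (mod 2 * int n)" for k
  proof -
    have "circ_adj n a (vs ! (k mod L)) (vs ! (Suc (k mod L) mod L))"
      using assms \<open>0 < L\<close> by (simp add: circ_cycle_def L_def)
    from circ_adj_step[OF this] show ?thesis
      by (simp add: v_def mod_Suc_eq)
  qed
  then obtain e where e: "\<And>k. e k \<in> {-1, 0, 1}"
    and step: "\<And>k. [v (Suc k) = v k + (int a * e k + int n * (1 - \<bar>e k\<bar>))] (mod 2 * int n)"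
    by (metis add.assoc)
  have "[int (vs ! (t mod L))
      = int (vs ! 0) + (int a * (\<Sum>k<t. e k) + int n * (\<Sum>k<t. 1 - \<bar>e k\<bar>))] (mod 2 * int n)" for t
    using walk_cong_sum[of t v "\<lambda>k. int a * e k + int n * (1 - \<bar>e k\<bar>)"] step
    by (simp add: v_def sum.distrib sum_distrib_left)
  with e show ?thesis
    unfolding L_def by (rule that)
qed

lemma odd_circ_cycle_meets_residues:
  assumes "coprime (int a) (int n)" "0 < n" "circ_cycle n a vs" "odd (length vs)"
  shows "\<exists>k<length vs. [int (vs ! k) = r] (mod int n)"
proof -
  define L where "L = length vs"
  obtain e where e: "\<And>k. e k \<in> {-1, 0, 1}"
    and disp: "\<And>t. [int (vs ! (t mod L))
      = int (vs ! 0) + (int a * (\<Sum>k<t. e k) + int n * (\<Sum>k<t. 1 - \<bar>e k\<bar>))] (mod 2 * int n)"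
    using circ_cycle_displacement[OF assms(3)] unfolding L_def by blast
  define Q where "Q t = (\<Sum>k<t. e k)" for t
  define K where "K t = (\<Sum>k<t. 1 - \<bar>e k\<bar>)" for t
  have closing: "[int a * Q L + int n * K L = 0] (mod 2 * int n)"
    using disp[of L] by (simp add: Q_def K_def) (metis cong_add_lcancel_0 cong_sym)
  have parity: "odd (Q L + K L)"
  proof -
    have "odd (e k + (1 - \<bar>e k\<bar>))" for k
      using e[of k] by auto
    then have "even (\<Sum>k<L. e k + (1 - \<bar>e k\<bar>)) \<longleftrightarrow> even L"
      by (simp add: even_sum_iff)
    then show ?thesis
      using assms(4) by (simp add: Q_def K_def L_def sum.distrib)
  qed
  have "int n dvd Q L" "Q L \<noteq> 0"
    using cong_odd_sum_imp_dvd_nonzero[OF assms(1) _ closing parity] assms(2) by auto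
  moreover have "\<bar>Q (Suc k) - Q k\<bar> \<le> 1" for k
    using e[of k] by (auto simp: Q_def)
  moreover obtain x where x: "[int a * x = r - int (vs ! 0)] (mod int n)"
    using cong_solve_dvd_int[of "int a" "int n"] assms(1) by auto
  ultimately obtain t where "t < L" and Qt: "[Q t = x] (mod int n)"
    using int_walk_meets_residues[of L Q "int n" x] assms(2) by (auto simp: Q_def)
  have "[int (vs ! t) = int (vs ! 0) + (int a * Q t + int n * K t)] (mod 2 * int n)"
    using disp[of t] \<open>t < L\<close> by (simp add: Q_def K_def)
  then have "[int (vs ! t) = int (vs ! 0) + (int a * Q t + int n * K t)] (mod int n)"
    by (rule cong_dvd_modulus) simp
  also have "[int (vs ! 0) + (int a * Q t + int n * K t) = int (vs ! 0) + (int a * x + 0)] (mod int n)"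
    using Qt by (intro cong_add cong_scalar_left) (simp_all add: cong_0_iff)
  also have "[int (vs ! 0) + (int a * x + 0) = r] (mod int n)"
    using x by (metis add.commute add_0_right cong_add_rcancel diff_add_cancel)
  finally show ?thesis
    using \<open>t < L\<close> by (auto simp: L_def)
qed

lemma circ_cycle_set_subset_nbhd:
  assumes "circ_cycle n a vs"
  shows "set vs \<subseteq> circ_nbhd n a (set vs)"
proof
  fix u assume "u \<in> set vs"
  then obtain k where k: "k < length vs" "vs ! k = u"
    by (auto simp: in_set_conv_nth)
  define w where "w = vs ! (Suc k mod length vs)"
  have "circ_adj n a w u"
    using assms k unfolding circ_cycle_def w_def by (auto intro: circ_adj_sym)
  moreover have "w \<in> set vs"
    unfolding w_def using k(1) by (intro nth_mem mod_less_divisor) linarith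
  ultimately show "u \<in> circ_nbhd n a (set vs)"
    by (auto simp: circ_nbhd_def circ_adj_def)
qed

theorem lemma2p3:
  fixes n a :: nat and vs :: "nat list"
  assumes "1 \<le> a" and "a < n" and "a \<in> {1, 2}"
    and "circ_connected n a" and "circ_cubic n a"
    and "circ_cycle n a vs" and "odd (length vs)"
  shows "circ_nbhd n a (set vs) = circ_verts n"
proof
  show "circ_nbhd n a (set vs) \<subseteq> circ_verts n"
    by (auto simp: circ_nbhd_def)
  have "0 < n"
    using assms(1,2) by simp
  have "coprime (int a) (int n)"
    using assms(3,4) odd_if_circ_connected_2[OF _ \<open>0 < n\<close>] by auto
  show "circ_verts n \<subseteq> circ_nbhd n a (set vs)"
  proof
    fix u assume u: "u \<in> circ_verts n"
    show "u \<in> circ_nbhd n a (set vs)"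
    proof (cases "u \<in> set vs")
      case True
      then show ?thesis
        using circ_cycle_set_subset_nbhd[OF assms(6)] by blast
    next
      case False
      obtain k where k: "k < length vs" "[int (vs ! k) = int u] (mod int n)"
        using odd_circ_cycle_meets_residues[OF \<open>coprime (int a) (int n)\<close> \<open>0 < n\<close> assms(6,7)] by blast
      moreover have "vs ! k \<in> circ_verts n"
        using assms(6) k(1) by (auto simp: circ_cycle_def circ_adj_def)
      ultimately have "circ_adj n a (vs ! k) u"
        using False u by (intro circ_adj_if_cong) auto
      with k(1) u show ?thesis
        by (auto simp: circ_nbhd_def)
    qed
  qed
qed

end
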